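(* Let $m\ge 3$ and let $K\ne\Delta_{[m]}$ be a simplicial complex on $[m]$. If $\mathrm{Bier}(K)$ is a weak suspension but not a suspension, then $\chi(\mathrm{Bier}(K))=m$.
   Context: A simplicial complex $K$ on $[m]=\{1,\dots,m\}$ is a nonempty family of subsets of $[m]$ closed under taking subsets; $V(K)=\{i:\{i\}\in K\}$. $\Delta_{[m]}=2^{[m]}$. Let $[m']=\{1',\dots,m'\}$ be a disjoint copy of $[m]$, $I'=\{i':i\in I\}$. For $K\ne\Delta_{[m]}$ the Alexander dual $K^\vee$ is the complex on $[m']$ with $J'\in K^\vee$ iff $[m]\setminus J\notin K$. The Bier sphere $\mathrm{Bier}(K)$ is the complex on $[m]\sqcup[m']$ with faces $I\sqcup J'$, $I\in K$, $J'\in K^\vee$, $I\cap J=\varnothing$. The chromatic number $\chi(L)$ is the least number of colors in a map $c\colon V(L)\to C$ with $c(u)\ne c(v)$ whenever $\{u,v\}\in L$. A complex $L$ is a weak suspension if there exist distinct $a,b\in V(L)$ with $\{a,b\}\notin L$ such that each of $a,b$ forms an edge of $L$ with every vertex of $V(L)\setminus\{a,b\}$. $L$ (on vertex set $W$) is a suspension if there exist distinct $v,w\in W$ with $L=\{\varnothing,\{v\},\{w\}\}*\bigl(L\cap 2^{W\setminus\{v,w\}}\bigr)$, where $*$ denotes the join $K_1*K_2=\{\sigma_1\sqcup\sigma_2:\sigma_j\in K_j\}$. *)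

theory Defs
  imports Main
begin

definition simplicial_complex :: "nat \<Rightarrow> nat set set \<Rightarrow> bool" where
  "simplicial_complex m K \<longleftrightarrow> K \<noteq> {} \<and> K \<subseteq> Pow {1..m} \<and>
     (\<forall>\<sigma> \<in> K. \<forall>\<tau>. \<tau> \<subseteq> \<sigma> \<longrightarrow> \<tau> \<in> K)"

definition vertices :: "'a set set \<Rightarrow> 'a set" where
  "vertices L = {v. {v} \<in> L}"

text \<open>Alexander dual, on the copy [m'] (the copy i' of i is represented by i itself here;
  it is tagged with Inr inside the Bier sphere).\<close>
definition alexander_dual :: "nat \<Rightarrow> nat set set \<Rightarrow> nat set set" where
  "alexander_dual m K = {J. J \<subseteq> {1..m} \<and> {1..m} - J \<notin> K}"

text \<open>Bier sphere on [m] disjoint-union [m']: i is Inl i, i' is Inr i.\<close>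
definition bier :: "nat \<Rightarrow> nat set set \<Rightarrow> (nat + nat) set set" where
  "bier m K = {Inl ` I \<union> Inr ` J | I J. I \<in> K \<and> J \<in> alexander_dual m K \<and> I \<inter> J = {}}"

definition chromatic_number :: "'a set set \<Rightarrow> nat" where
  "chromatic_number L = (LEAST n. \<exists>c :: 'a \<Rightarrow> nat.
      (\<forall>v \<in> vertices L. c v < n) \<and>
      (\<forall>u \<in> vertices L. \<forall>v \<in> vertices L. u \<noteq> v \<and> {u, v} \<in> L \<longrightarrow> c u \<noteq> c v))"

definition weak_suspension :: "'a set set \<Rightarrow> bool" where
  "weak_suspension L \<longleftrightarrow> (\<exists>a \<in> vertices L. \<exists>b \<in> vertices L. a \<noteq> b \<and> {a, b} \<notin> L \<and>
      (\<forall>v \<in> vertices L - {a, b}. {a, v} \<in> L \<and> {b, v} \<in> L))"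

definition join :: "'a set set \<Rightarrow> 'a set set \<Rightarrow> 'a set set" where
  "join K1 K2 = {s1 \<union> s2 | s1 s2. s1 \<in> K1 \<and> s2 \<in> K2 \<and> s1 \<inter> s2 = {}}"

text \<open>Suspension, with vertex set W taken to be V(L).\<close>
definition suspension :: "'a set set \<Rightarrow> bool" where
  "suspension L \<longleftrightarrow> (\<exists>v \<in> vertices L. \<exists>w \<in> vertices L. v \<noteq> w \<and>
      L = join {{}, {v}, {w}} (L \<inter> Pow (vertices L - {v, w})))"

end

theory Submission
  imports Defs
begin

text \<open>
  A proper colouring of Bier(K) with m colours gives each of i and i' the colour i; this works
  because i and i' are never adjacent. For the lower bound take the weak-suspension pair a, b.
  Since Bier(K) is not a suspension, some face s avoiding a and b cannot be extended by a or by b.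
  A case analysis shows that a and b must be i and i' for some i, and that s then lies in a face
  I \<union> J' with I \<union> J = [m] - {i}, which has m - 1 vertices. Adding a to it gives a clique on
  m vertices.
\<close>

definition proper_colouring :: "'a set set \<Rightarrow> nat \<Rightarrow> ('a \<Rightarrow> nat) \<Rightarrow> bool" where
  "proper_colouring L n c \<longleftrightarrow> (\<forall>v \<in> vertices L. c v < n) \<and>
     (\<forall>u \<in> vertices L. \<forall>v \<in> vertices L. u \<noteq> v \<and> {u, v} \<in> L \<longrightarrow> c u \<noteq> c v)"

definition clique :: "'a set set \<Rightarrow> 'a set \<Rightarrow> bool" where
  "clique L C \<longleftrightarrow> C \<subseteq> vertices L \<and> (\<forall>u \<in> C. \<forall>v \<in> C. u \<noteq> v \<longrightarrow> {u, v} \<in> L)"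

lemma chromatic_number_eqI:
  assumes "proper_colouring L n c" and "clique L C" "finite C" "card C = n"
  shows "chromatic_number L = n"
  unfolding chromatic_number_def
proof (rule Least_equality)
  show "\<exists>c. (\<forall>v \<in> vertices L. c v < n) \<and>
      (\<forall>u \<in> vertices L. \<forall>v \<in> vertices L. u \<noteq> v \<and> {u, v} \<in> L \<longrightarrow> c u \<noteq> c v)"
    using assms(1) unfolding proper_colouring_def by blast
next
  fix k :: nat assume "\<exists>c. (\<forall>v \<in> vertices L. c v < k) \<and>
      (\<forall>u \<in> vertices L. \<forall>v \<in> vertices L. u \<noteq> v \<and> {u, v} \<in> L \<longrightarrow> c u \<noteq> c v)"
  then obtain c' where "proper_colouring L k c'" unfolding proper_colouring_def by blast
  then have "inj_on c' C" "c' ` C \<subseteq> {..<k}"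
    using assms(2) unfolding proper_colouring_def clique_def inj_on_def by blast+
  then have "card C \<le> card {..<k}" using card_inj_on_le finite_lessThan by blast
  then show "n \<le> k" using assms(4) by simp
qed

lemma simplicial_complex_subset_closed:
  "simplicial_complex m K \<Longrightarrow> \<sigma> \<in> K \<Longrightarrow> \<tau> \<subseteq> \<sigma> \<Longrightarrow> \<tau> \<in> K"
  unfolding simplicial_complex_def by blast

lemma simplicial_complex_face_subset:
  "simplicial_complex m K \<Longrightarrow> \<sigma> \<in> K \<Longrightarrow> \<sigma> \<subseteq> {1..m}"
  unfolding simplicial_complex_def by blast

lemma simplicial_complex_empty_face: "simplicial_complex m K \<Longrightarrow> {} \<in> K"
  unfolding simplicial_complex_def by blast

lemma simplicial_complex_full_notin:
  assumes "simplicial_complex m K" and "K \<noteq> Pow {1..m}"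
  shows "{1..m} \<notin> K"
  using assms unfolding simplicial_complex_def by blast

lemma suspensionI:
  assumes closed: "\<And>\<sigma> \<tau>. \<sigma> \<in> L \<Longrightarrow> \<tau> \<subseteq> \<sigma> \<Longrightarrow> \<tau> \<in> L"
    and "a \<in> vertices L" "b \<in> vertices L" "a \<noteq> b" and nonedge: "{a, b} \<notin> L"
    and extend: "\<And>\<sigma>. \<sigma> \<in> L \<Longrightarrow> a \<notin> \<sigma> \<Longrightarrow> b \<notin> \<sigma> \<Longrightarrow> insert a \<sigma> \<in> L \<and> insert b \<sigma> \<in> L"
  shows "suspension L"
proof -
  let ?P = "L \<inter> Pow (vertices L - {a, b})"
  have face_vertices: "\<sigma> \<subseteq> vertices L" if "\<sigma> \<in> L" for \<sigma>
    using closed[OF that] unfolding vertices_def by blast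
  have "L \<subseteq> join {{}, {a}, {b}} ?P"
  proof
    fix \<sigma> assume \<sigma>: "\<sigma> \<in> L"
    have "\<not> {a, b} \<subseteq> \<sigma>" using closed[OF \<sigma>] nonedge by blast
    moreover have "\<sigma> - {a, b} \<in> ?P" using closed[OF \<sigma>] face_vertices[OF \<sigma>] by blast
    ultimately have "\<sigma> = {} \<union> (\<sigma> - {a, b}) \<or> \<sigma> = {a} \<union> (\<sigma> - {a, b}) \<or> \<sigma> = {b} \<union> (\<sigma> - {a, b})"
      and "\<sigma> - {a, b} \<in> ?P"
      by blast+
    then show "\<sigma> \<in> join {{}, {a}, {b}} ?P" unfolding join_def by blast
  qed
  moreover have "join {{}, {a}, {b}} ?P \<subseteq> L"
    unfolding join_def using extend by fastforce
  ultimately show ?thesis unfolding suspension_def using assms(2-4) by blast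
qed

lemma vimage_Inl_Inr_insert [simp]:
  "Inl -` insert (Inl x) A = insert x (Inl -` A)" "Inl -` insert (Inr y) A = Inl -` A"
  "Inr -` insert (Inr y) A = insert y (Inr -` A)" "Inr -` insert (Inl x) A = Inr -` A"
  by auto

lemma bier_iff:
  "\<sigma> \<in> bier m K \<longleftrightarrow>
     Inl -` \<sigma> \<in> K \<and> Inr -` \<sigma> \<in> alexander_dual m K \<and> Inl -` \<sigma> \<inter> Inr -` \<sigma> = {}"
proof
  assume "\<sigma> \<in> bier m K"
  then obtain I J where "\<sigma> = Inl ` I \<union> Inr ` J" "I \<in> K" "J \<in> alexander_dual m K" "I \<inter> J = {}"
    unfolding bier_def by blast
  moreover from this(1) have "Inl -` \<sigma> = I" "Inr -` \<sigma> = J" by auto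
  ultimately show "Inl -` \<sigma> \<in> K \<and> Inr -` \<sigma> \<in> alexander_dual m K \<and> Inl -` \<sigma> \<inter> Inr -` \<sigma> = {}"
    by simp
next
  have "\<sigma> = Inl ` (Inl -` \<sigma>) \<union> Inr ` (Inr -` \<sigma>)"
    by (auto simp: image_iff) (metis sum.exhaust)
  then show "Inl -` \<sigma> \<in> K \<and> Inr -` \<sigma> \<in> alexander_dual m K \<and> Inl -` \<sigma> \<inter> Inr -` \<sigma> = {}
      \<Longrightarrow> \<sigma> \<in> bier m K"
    unfolding bier_def by blast
qed

lemma alexander_dual_iff:
  "J \<in> alexander_dual m K \<longleftrightarrow> J \<subseteq> {1..m} \<and> {1..m} - J \<notin> K"
  unfolding alexander_dual_def by simp

lemma alexander_dual_subset_closed: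
  assumes "simplicial_complex m K" "J \<in> alexander_dual m K" "J' \<subseteq> J"
  shows "J' \<in> alexander_dual m K"
proof -
  have "{1..m} - J \<subseteq> {1..m} - J'" using assms(3) by blast
  then show ?thesis
    using assms simplicial_complex_subset_closed[OF assms(1)] unfolding alexander_dual_iff
    by (meson subset_trans)
qed

lemma bier_subset_closed:
  assumes "simplicial_complex m K" "\<sigma> \<in> bier m K" "\<tau> \<subseteq> \<sigma>"
  shows "\<tau> \<in> bier m K"
proof -
  have "Inl -` \<tau> \<subseteq> Inl -` \<sigma>" "Inr -` \<tau> \<subseteq> Inr -` \<sigma>"
    using assms(3) by (simp_all add: vimage_mono)
  moreover have "Inl -` \<sigma> \<in> K" "Inr -` \<sigma> \<in> alexander_dual m K" "Inl -` \<sigma> \<inter> Inr -` \<sigma> = {}"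
    using assms(2) unfolding bier_iff by simp_all
  ultimately show ?thesis
    unfolding bier_iff
    using simplicial_complex_subset_closed[OF assms(1)] alexander_dual_subset_closed[OF assms(1)]
    by (meson disjoint_iff subset_iff)
qed

lemma bier_face_finite:
  assumes "simplicial_complex m K" "\<sigma> \<in> bier m K"
  shows "finite \<sigma>"
proof -
  obtain I J where "\<sigma> = Inl ` I \<union> Inr ` J" "I \<in> K" "J \<in> alexander_dual m K"
    using assms(2) unfolding bier_def by blast
  moreover from this have "finite I" "finite J"
    using simplicial_complex_face_subset[OF assms(1)] finite_subset
    unfolding alexander_dual_iff by (metis finite_atLeastAtMost)+
  ultimately show ?thesis by simp
qed

lemma bier_face_vertices:
  assumes "simplicial_complex m K" "\<sigma> \<in> bier m K"
  shows "\<sigma> \<subseteq> vertices (bier m K)"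
  using bier_subset_closed[OF assms] unfolding vertices_def by blast

lemma Inl_vertex_bier_iff:
  assumes "simplicial_complex m K" "K \<noteq> Pow {1..m}"
  shows "Inl k \<in> vertices (bier m K) \<longleftrightarrow> {k} \<in> K"
  using simplicial_complex_full_notin[OF assms]
  unfolding vertices_def bier_iff alexander_dual_iff by auto

lemma Inr_vertex_bier_iff:
  assumes "simplicial_complex m K"
  shows "Inr k \<in> vertices (bier m K) \<longleftrightarrow> {k} \<in> alexander_dual m K"
  using simplicial_complex_empty_face[OF assms] unfolding vertices_def bier_iff by auto

lemma bier_vertex_index:
  assumes SC: "simplicial_complex m K" and "K \<noteq> Pow {1..m}"
    and "Inl i \<in> vertices (bier m K) \<or> Inr i \<in> vertices (bier m K)"
  shows "i \<in> {1..m}"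
  using assms(3) simplicial_complex_face_subset[OF SC]
  unfolding Inl_vertex_bier_iff[OF assms(1,2)] Inr_vertex_bier_iff[OF SC] alexander_dual_iff
  by blast

lemma bier_mixed_edge_iff:
  "{Inl x, Inr y} \<in> bier m K \<longleftrightarrow> {x} \<in> K \<and> {y} \<in> alexander_dual m K \<and> x \<noteq> y"
  unfolding bier_iff by auto

lemma bier_mirror_not_edge: "{Inl k, Inr k} \<notin> bier m K"
  by (simp add: bier_mixed_edge_iff)

lemma bier_insert_Inl_iff:
  assumes "\<sigma> \<in> bier m K" "Inr i \<notin> \<sigma>"
  shows "insert (Inl i) \<sigma> \<in> bier m K \<longleftrightarrow> insert i (Inl -` \<sigma>) \<in> K"
  using assms unfolding bier_iff by auto

lemma bier_insert_Inr_iff: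
  assumes "\<sigma> \<in> bier m K" "Inl i \<notin> \<sigma>" "i \<in> {1..m}"
  shows "insert (Inr i) \<sigma> \<in> bier m K \<longleftrightarrow> {1..m} - insert i (Inr -` \<sigma>) \<notin> K"
  using assms unfolding bier_iff alexander_dual_iff by auto

lemma bier_face_of_missing_index:
  assumes SC: "simplicial_complex m K" and A: "A \<in> K" and i: "i \<in> {1..m}" "i \<notin> A"
    and nonface: "insert i A \<notin> K"
  shows "\<exists>\<tau> \<in> bier m K. card \<tau> = m - 1 \<and> Inl i \<notin> \<tau> \<and> Inr i \<notin> \<tau>"
proof -
  define B where "B = {1..m} - insert i A"
  let ?\<tau> = "Inl ` A \<union> Inr ` B"
  have A_sub: "A \<subseteq> {1..m}" using simplicial_complex_face_subset[OF SC A] .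
  then have complement: "{1..m} - B = insert i A" using i unfolding B_def by blast
  have "Inl -` ?\<tau> = A" "Inr -` ?\<tau> = B" by auto
  then have "?\<tau> \<in> bier m K"
    using A nonface complement unfolding bier_iff alexander_dual_iff B_def by auto
  moreover have "card ?\<tau> = m - 1"
  proof -
    have "finite A" using A_sub finite_subset by blast
    have "card {1..m} = card B + card (insert i A)"
      using complement A_sub i by (metis B_def Diff_partition Diff_subset card_Un_disjoint
          finite_atLeastAtMost finite_subset insert_subset Diff_disjoint)
    moreover have "card ?\<tau> = card A + card B"
      using \<open>finite A\<close> unfolding B_def by (subst card_Un_disjoint) (auto simp: card_image)
    ultimately show ?thesis using \<open>finite A\<close> i(2) by simp
  qed
  moreover have "Inl i \<notin> ?\<tau>" "Inr i \<notin> ?\<tau>" using i(2) unfolding B_def by auto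
  ultimately show ?thesis by blast
qed

lemma bier_face_of_nonextendable:
  assumes SC: "simplicial_complex m K" and \<sigma>: "\<sigma> \<in> bier m K" and i: "i \<in> {1..m}"
    and avoid: "Inl i \<notin> \<sigma>" "Inr i \<notin> \<sigma>"
    and "insert (Inl i) \<sigma> \<notin> bier m K \<or> insert (Inr i) \<sigma> \<notin> bier m K"
  shows "\<exists>\<tau> \<in> bier m K. card \<tau> = m - 1 \<and> Inl i \<notin> \<tau> \<and> Inr i \<notin> \<tau>"
  using assms(6)
proof
  assume "insert (Inl i) \<sigma> \<notin> bier m K"
  then have "insert i (Inl -` \<sigma>) \<notin> K" using bier_insert_Inl_iff[OF \<sigma> avoid(2)] by simp
  moreover have "Inl -` \<sigma> \<in> K" using \<sigma> unfolding bier_iff by simp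
  ultimately show ?thesis using bier_face_of_missing_index[OF SC _ i] avoid(1) by simp
next
  assume "insert (Inr i) \<sigma> \<notin> bier m K"
  then have A: "{1..m} - insert i (Inr -` \<sigma>) \<in> K" using bier_insert_Inr_iff[OF \<sigma> avoid(1) i] by simp
  have "insert i ({1..m} - insert i (Inr -` \<sigma>)) = {1..m} - Inr -` \<sigma>" using i avoid(2) by auto
  moreover have "{1..m} - Inr -` \<sigma> \<notin> K" using \<sigma> unfolding bier_iff alexander_dual_iff by simp
  ultimately show ?thesis using bier_face_of_missing_index[OF SC A i] by auto
qed

lemma bier_insert_Inl_of_coatoms:
  assumes SC: "simplicial_complex m K" and coatoms: "{1..m} - {i} \<in> K" "{1..m} - {j} \<in> K"
    and "i \<noteq> j" "i \<in> {1..m}" and \<sigma>: "\<sigma> \<in> bier m K" "Inl j \<notin> \<sigma>"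
  shows "insert (Inl i) \<sigma> \<in> bier m K"
proof -
  have "Inr i \<notin> \<sigma>"
  proof
    assume "Inr i \<in> \<sigma>"
    then have "{1..m} - Inr -` \<sigma> \<subseteq> {1..m} - {i}" by auto
    then show False
      using \<sigma>(1) coatoms(1) simplicial_complex_subset_closed[OF SC] unfolding bier_iff alexander_dual_iff
      by blast
  qed
  moreover have "insert i (Inl -` \<sigma>) \<subseteq> {1..m} - {j}"
    using simplicial_complex_face_subset[OF SC] \<sigma> assms(4,5) unfolding bier_iff by auto
  ultimately show ?thesis
    using bier_insert_Inl_iff[OF \<sigma>(1)] simplicial_complex_subset_closed[OF SC coatoms(2)] by blast
qed

lemma bier_insert_Inr_of_nonvertices:
  assumes SC: "simplicial_complex m K" and nonvertices: "{i} \<notin> K" "{j} \<notin> K"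
    and "i \<noteq> j" "i \<in> {1..m}" "j \<in> {1..m}" and \<sigma>: "\<sigma> \<in> bier m K" "Inr j \<notin> \<sigma>"
  shows "insert (Inr i) \<sigma> \<in> bier m K"
proof -
  have "Inl i \<notin> \<sigma>"
    using \<sigma>(1) nonvertices(1) simplicial_complex_subset_closed[OF SC] unfolding bier_iff
    by (metis empty_subsetI insert_subset vimageI2)
  moreover have "{j} \<subseteq> {1..m} - insert i (Inr -` \<sigma>)" using assms(4,6) \<sigma>(2) by auto
  then have "{1..m} - insert i (Inr -` \<sigma>) \<notin> K"
    using nonvertices(2) simplicial_complex_subset_closed[OF SC] by blast
  ultimately show ?thesis using bier_insert_Inr_iff[OF \<sigma>(1) _ assms(5)] by blast
qed

lemma bier_weak_suspension_pair_face:
  assumes SC: "simplicial_complex m K" and KP: "K \<noteq> Pow {1..m}"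
    and a: "a \<in> vertices (bier m K)" and b: "b \<in> vertices (bier m K)"
    and "a \<noteq> b" and nonedge: "{a, b} \<notin> bier m K"
    and cone: "\<forall>v \<in> vertices (bier m K) - {a, b}. {a, v} \<in> bier m K \<and> {b, v} \<in> bier m K"
    and \<sigma>: "\<sigma> \<in> bier m K" "a \<notin> \<sigma>" "b \<notin> \<sigma>"
    and nonextendable: "insert a \<sigma> \<notin> bier m K \<or> insert b \<sigma> \<notin> bier m K"
  shows "\<exists>\<tau> \<in> bier m K. card \<tau> = m - 1 \<and> a \<notin> \<tau> \<and> b \<notin> \<tau>"
proof -
  note Inl_vertex = Inl_vertex_bier_iff[OF SC KP] and Inr_vertex = Inr_vertex_bier_iff[OF SC]
  have index: "i \<in> {1..m}" if "Inl i \<in> {a, b} \<or> Inr i \<in> {a, b}" for i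
    using bier_vertex_index[OF SC KP] a b that by blast
  have coatom: "{1..m} - {i} \<in> K" if "Inl i \<in> {a, b}" "Inr i \<notin> {a, b}" for i
  proof -
    have "Inr i \<notin> vertices (bier m K)"
      using cone that bier_mirror_not_edge by blast
    moreover have "i \<in> {1..m}" using index that(1) by blast
    ultimately show ?thesis using Inr_vertex alexander_dual_iff by simp
  qed
  have nonvertex: "{i} \<notin> K" if "Inr i \<in> {a, b}" "Inl i \<notin> {a, b}" for i
  proof -
    have "Inl i \<notin> vertices (bier m K)"
    proof
      assume "Inl i \<in> vertices (bier m K)"
      then have "{Inr i, Inl i} \<in> bier m K" using cone that by blast
      then show False using bier_mirror_not_edge by (simp add: insert_commute)
    qed
    then show ?thesis using Inl_vertex by simp
  qed
  have mirror: "i = j" if ab: "{Inl i, Inr j} = {a, b}" for i j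
  proof -
    have "Inl i \<in> {a, b}" "Inr j \<in> {a, b}" using ab by blast+
    then have "{i} \<in> K" "{j} \<in> alexander_dual m K" using a b Inl_vertex Inr_vertex by blast+
    then show ?thesis using nonedge ab bier_mixed_edge_iff by metis
  qed
  show ?thesis
  proof (cases a; cases b)
    fix i j assume ab: "a = Inl i" "b = Inl j"
    have "insert (Inl i) \<sigma> \<in> bier m K" "insert (Inl j) \<sigma> \<in> bier m K"
      using bier_insert_Inl_of_coatoms[OF SC coatom coatom] index \<sigma> ab \<open>a \<noteq> b\<close> by auto
    then show ?thesis using nonextendable ab by simp
  next
    fix i j assume ab: "a = Inr i" "b = Inr j"
    have "insert (Inr i) \<sigma> \<in> bier m K" "insert (Inr j) \<sigma> \<in> bier m K"
      using bier_insert_Inr_of_nonvertices[OF SC nonvertex nonvertex] index \<sigma> ab \<open>a \<noteq> b\<close> by auto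
    then show ?thesis using nonextendable ab by simp
  next
    fix i j assume ab: "a = Inl i" "b = Inr j"
    then show ?thesis
      using bier_face_of_nonextendable[OF SC \<sigma>(1)] mirror[of i j] index \<sigma> nonextendable by auto
  next
    fix i j assume ab: "a = Inr i" "b = Inl j"
    then show ?thesis
      using bier_face_of_nonextendable[OF SC \<sigma>(1)] mirror[of j i] index \<sigma> nonextendable
      by (auto simp: insert_commute)
  qed
qed

lemma bier_index_colouring:
  assumes SC: "simplicial_complex m K" and KP: "K \<noteq> Pow {1..m}"
  shows "proper_colouring (bier m K) m (case_sum (\<lambda>i. i - 1) (\<lambda>i. i - 1))"
proof -
  let ?c = "case_sum (\<lambda>i. i - 1) (\<lambda>i. i - 1) :: nat + nat \<Rightarrow> nat"
  have index: "1 \<le> i \<and> i \<le> m" if "Inl i \<in> vertices (bier m K) \<or> Inr i \<in> vertices (bier m K)" for i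
    using bier_vertex_index[OF SC KP that] by simp
  have "?c v < m" if "v \<in> vertices (bier m K)" for v
    using that index by (cases v) fastforce+
  moreover have "?c u \<noteq> ?c v"
    if "u \<in> vertices (bier m K)" "v \<in> vertices (bier m K)" "u \<noteq> v" "{u, v} \<in> bier m K" for u v
  proof (cases u; cases v)
    fix i j assume "u = Inl i" "v = Inl j"
    then show ?thesis using that index[of i] index[of j] by auto
  next
    fix i j assume "u = Inr i" "v = Inr j"
    then show ?thesis using that index[of i] index[of j] by auto
  next
    fix i j assume "u = Inl i" "v = Inr j"
    then show ?thesis using that index[of i] index[of j] bier_mirror_not_edge by (cases "i = j") auto
  next
    fix i j assume "u = Inr i" "v = Inl j"
    then show ?thesis using that index[of i] index[of j] bier_mirror_not_edge
      by (cases "i = j") (auto simp: insert_commute)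
  qed
  ultimately show ?thesis unfolding proper_colouring_def by blast
qed

lemma bier_clique_of_weak_suspension:
  assumes SC: "simplicial_complex m K" and KP: "K \<noteq> Pow {1..m}"
    and "weak_suspension (bier m K)" and "\<not> suspension (bier m K)"
  shows "\<exists>C. clique (bier m K) C \<and> finite C \<and> card C = m"
proof -
  obtain a b where pair: "a \<in> vertices (bier m K)" "b \<in> vertices (bier m K)" "a \<noteq> b"
      "{a, b} \<notin> bier m K"
    and cone: "\<forall>v \<in> vertices (bier m K) - {a, b}. {a, v} \<in> bier m K \<and> {b, v} \<in> bier m K"
    using assms(3) unfolding weak_suspension_def by blast
  have "\<not> (\<forall>\<sigma> \<in> bier m K. a \<notin> \<sigma> \<longrightarrow> b \<notin> \<sigma> \<longrightarrow> insert a \<sigma> \<in> bier m K \<and> insert b \<sigma> \<in> bier m K)"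
  proof
    assume "\<forall>\<sigma> \<in> bier m K. a \<notin> \<sigma> \<longrightarrow> b \<notin> \<sigma> \<longrightarrow> insert a \<sigma> \<in> bier m K \<and> insert b \<sigma> \<in> bier m K"
    then have "suspension (bier m K)"
      by (intro suspensionI[OF bier_subset_closed[OF SC] pair]) auto
    with assms(4) show False ..
  qed
  then obtain \<sigma> where "\<sigma> \<in> bier m K" "a \<notin> \<sigma>" "b \<notin> \<sigma>"
    "insert a \<sigma> \<notin> bier m K \<or> insert b \<sigma> \<notin> bier m K"
    by blast
  then obtain \<tau> where \<tau>: "\<tau> \<in> bier m K" "card \<tau> = m - 1" "a \<notin> \<tau>" "b \<notin> \<tau>"
    using bier_weak_suspension_pair_face[OF SC KP pair cone] by blast
  \<comment> \<open>For m = 0 the only simplicial complex is Pow {}.\<close>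
  have "m \<noteq> 0" using SC KP unfolding simplicial_complex_def by auto
  moreover have "clique (bier m K) (insert a \<tau>)"
    using pair(1) cone \<tau> bier_face_vertices[OF SC \<tau>(1)] bier_subset_closed[OF SC \<tau>(1)]
    unfolding clique_def by (auto simp: insert_commute)
  ultimately show ?thesis using \<tau> bier_face_finite[OF SC \<tau>(1)] by fastforce
qed

theorem mainTheorem9:
  fixes m :: nat and K :: "nat set set"
  assumes "m \<ge> 3"
    and "simplicial_complex m K"
    and "K \<noteq> Pow {1..m}"
    and "weak_suspension (bier m K)"
    and "\<not> suspension (bier m K)"
  shows "chromatic_number (bier m K) = m"
proof -
  obtain C where "clique (bier m K) C" "finite C" "card C = m"
    using bier_clique_of_weak_suspension[OF assms(2-5)] by blast
  then show ?thesis using chromatic_number_eqI bier_index_colouring[OF assms(2,3)] by blast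
qed

end
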